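(* Let $(D^n,\omega_h^n)_{n\in\mathbb N}$ be a solution of the discrete linearized scheme described in the context, with discrete free energy $\mathcal E^n$. Then for all $n\ge0$, $$ \frac{\mathcal E^{n+1}-\mathcal E^n}{\Delta t}+\Delta t\,\mathcal R_h^n=-\frac{1}{\varepsilon\tau_0}\sum_{k=1}^{N_H}k\,\|D^{n+1}_k\|_{l^2(\mathbb T)}^2, $$ where $$ \mathcal R_h^n=\frac12\Big(\Big\|\frac{D^{n+1}-D^n}{\Delta t}\Big\|_{l^2}^2+\Big\|\frac{\mathcal A_h(\omega_h^{n+1}-\omega_h^n)}{\Delta t\,\sqrt{\rho}_\infty}\Big\|_{l^2(\mathbb T)}^2\Big)\ge0 . $$
   Context: Discrete setting. Fix $T_0>0$, $\varepsilon>0$, $\tau_0>0$, a time step $\Delta t>0$, an integer $N_H\ge1$, and an interval $(a,b)$ with periodic boundary conditions (a torus $\mathbb T$). Take a mesh $a=x_{1/2}<x_1<x_{3/2}<\dots<x_{N_x}<x_{N_x+1/2}=b$, cells $K_j=(x_{j-1/2},x_{j+1/2})$, $\Delta x_j=x_{j+1/2}-x_{j-1/2}$, $j\in\mathcal J=\{1,\dots,N_x\}$; cell indices are understood periodically modulo $N_x$. For grid functions $D=(D_j)_{j\in\mathcal J}$, $G=(G_j)_{j\in\mathcal J}$ set $\langle D,G\rangle_{l^2(\mathbb T)}=\sum_{j\in\mathcal J}\Delta x_j D_jG_j$ and $\|D\|_{l^2(\mathbb T)}^2=\langle D,D\rangle_{l^2(\mathbb T)}$; products and quotients of grid functions are taken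 componentwise. $(\rho_{\infty,j})_{j\in\mathcal J}$ are positive numbers (approximations of the equilibrium density), and $\sqrt{\rho}_\infty$ denotes the grid function $(\sqrt{\rho_{\infty,j}})_j$. Define $E_{\infty,j}=\frac{2T_0}{\sqrt{\rho_{\infty,j}}}\,\frac{\sqrt{\rho_{\infty,j+1}}-\sqrt{\rho_{\infty,j-1}}}{2\Delta x_j}$ and the discrete operators $$ (\mathcal A_hD)_j=\sqrt{T_0}\,\frac{D_{j+1}-D_{j-1}}{2\Delta x_j}-\frac{E_{\infty,j}}{2\sqrt{T_0}}D_j,\qquad (\mathcal A_h^\star D)_j=-\sqrt{T_0}\,\frac{D_{j+1}-D_{j-1}}{2\Delta x_j}-\frac{E_{\infty,j}}{2\sqrt{T_0}}D_j , $$ which are adjoint with respect to $\langle\cdot,\cdot\rangle_{l^2(\mathbb T)}$. Discrete linearized scheme: $D^n=(D^n_k)_{0\le k\le N_H}$, each $D^n_k$ a grid function, and grid functions $\omega^n_h$, satisfy for all $n\ge0$ $$ \varepsilon\frac{D^{n+1}_1-D^n_1}{\Delta t}+\mathcal A_hD^{n+1}_0-\sqrt2\,\mathcal A_h^\star D^{n+1}_2+\mathcal A_h\omega_h^{n+1}=-\frac1{\tau_0}D^{n+1}_1, $$ $$ \varepsilon\frac{D^{n+1}_k-D^n_k}{\Delta t}+\sqrt k\,\mathcal A_hD^{n+1}_{k-1}-\sqrt{k+1}\,\mathcal A_h^\star D^{n+1}_{k+1}=-\frac{k}{\tau_0}D^{n+1}_k,\quad k\in\{0,\dots,N_H\}\setminus\{1\},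 $$ with the convention $D^{n+1}_{-1}=D^{n+1}_{N_H+1}=0$, and for all $n\ge0$ (including $n=0$ for $\omega_h^0$) $$ \mathcal A_h^\star\big(\rho_\infty^{-1}\mathcal A_h\omega_h^{n}\big)=D^{n}_0-\sqrt{\rho}_\infty,\qquad \sum_{j\in\mathcal J}\Delta x_j\,\omega^{n}_{h,j}\,\rho_{\infty,j}^{-1/2}=0 . $$ Discrete equilibrium: $D_{\infty,0}=\sqrt{\rho}_\infty$, $D_{\infty,k}=0$ for $1\le k\le N_H$. Discrete free energy: $$ \mathcal E^n=\frac12\Big(\|D^n-D_\infty\|_{l^2}^2+\Big\|\frac{\mathcal A_h\omega_h^n}{\sqrt{\rho}_\infty}\Big\|_{l^2(\mathbb T)}^2\Big),\qquad \|D\|_{l^2}^2=\sum_{k=0}^{N_H}\|D_k\|_{l^2(\mathbb T)}^2 . $$ *)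

theory Defs
  imports Complex_Main
begin

text \<open>Periodic mesh with Nx cells, indexed by j in {0..<Nx} (cell j here is K_(j+1) of the paper).
  Grid functions are maps nat => real, only their values on {0..<Nx} matter.\<close>

definition nxt :: "nat \<Rightarrow> nat \<Rightarrow> nat" where
  "nxt Nx j = (j + 1) mod Nx"

definition prv :: "nat \<Rightarrow> nat \<Rightarrow> nat" where
  "prv Nx j = (j + Nx - 1) mod Nx"

definition l2ip :: "nat \<Rightarrow> (nat \<Rightarrow> real) \<Rightarrow> (nat \<Rightarrow> real) \<Rightarrow> (nat \<Rightarrow> real) \<Rightarrow> real" where
  "l2ip Nx dx D G = (\<Sum>j<Nx. dx j * D j * G j)"

definition l2sq :: "nat \<Rightarrow> (nat \<Rightarrow> real) \<Rightarrow> (nat \<Rightarrow> real) \<Rightarrow> real" where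
  "l2sq Nx dx D = l2ip Nx dx D D"

definition Einf :: "real \<Rightarrow> nat \<Rightarrow> (nat \<Rightarrow> real) \<Rightarrow> (nat \<Rightarrow> real) \<Rightarrow> nat \<Rightarrow> real" where
  "Einf T0 Nx dx rho j =
     2 * T0 / sqrt (rho j) * ((sqrt (rho (nxt Nx j)) - sqrt (rho (prv Nx j))) / (2 * dx j))"

definition Ah :: "real \<Rightarrow> nat \<Rightarrow> (nat \<Rightarrow> real) \<Rightarrow> (nat \<Rightarrow> real) \<Rightarrow> (nat \<Rightarrow> real) \<Rightarrow> nat \<Rightarrow> real" where
  "Ah T0 Nx dx rho D j =
     sqrt T0 * (D (nxt Nx j) - D (prv Nx j)) / (2 * dx j) - Einf T0 Nx dx rho j / (2 * sqrt T0) * D j"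

definition Ahs :: "real \<Rightarrow> nat \<Rightarrow> (nat \<Rightarrow> real) \<Rightarrow> (nat \<Rightarrow> real) \<Rightarrow> (nat \<Rightarrow> real) \<Rightarrow> nat \<Rightarrow> real" where
  "Ahs T0 Nx dx rho D j =
     - sqrt T0 * (D (nxt Nx j) - D (prv Nx j)) / (2 * dx j) - Einf T0 Nx dx rho j / (2 * sqrt T0) * D j"

definition Dinf :: "(nat \<Rightarrow> real) \<Rightarrow> nat \<Rightarrow> nat \<Rightarrow> real" where
  "Dinf rho k j = (if k = 0 then sqrt (rho j) else 0)"

text \<open>Solution D n k j (time level n, Hermite mode k, cell j), omega n j.\<close>
definition scheme ::
  "real \<Rightarrow> real \<Rightarrow> real \<Rightarrow> real \<Rightarrow> nat \<Rightarrow> nat \<Rightarrow> (nat \<Rightarrow> real) \<Rightarrow> (nat \<Rightarrow> real)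
   \<Rightarrow> (nat \<Rightarrow> nat \<Rightarrow> nat \<Rightarrow> real) \<Rightarrow> (nat \<Rightarrow> nat \<Rightarrow> real) \<Rightarrow> bool" where
  "scheme T0 eps tau0 dt NH Nx dx rho D \<omega> \<longleftrightarrow>
     (\<forall>n j. j < Nx \<longrightarrow>
        eps * (D (Suc n) 1 j - D n 1 j) / dt + Ah T0 Nx dx rho (D (Suc n) 0) j
        - sqrt 2 * (if 2 \<le> NH then Ahs T0 Nx dx rho (D (Suc n) 2) j else 0)
        + Ah T0 Nx dx rho (\<omega> (Suc n)) j
        = - (1 / tau0) * D (Suc n) 1 j)
   \<and> (\<forall>n k j. k \<le> NH \<longrightarrow> k \<noteq> 1 \<longrightarrow> j < Nx \<longrightarrow>
        eps * (D (Suc n) k j - D n k j) / dt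
        + (if k = 0 then 0 else sqrt (real k) * Ah T0 Nx dx rho (D (Suc n) (k - 1)) j)
        - (if k + 1 \<le> NH then sqrt (real (k + 1)) * Ahs T0 Nx dx rho (D (Suc n) (k + 1)) j else 0)
        = - (real k / tau0) * D (Suc n) k j)
   \<and> (\<forall>n j. j < Nx \<longrightarrow>
        Ahs T0 Nx dx rho (\<lambda>i. Ah T0 Nx dx rho (\<omega> n) i / rho i) j = D n 0 j - sqrt (rho j))
   \<and> (\<forall>n. (\<Sum>j<Nx. dx j * \<omega> n j / sqrt (rho j)) = 0)"

definition energy ::
  "real \<Rightarrow> nat \<Rightarrow> nat \<Rightarrow> (nat \<Rightarrow> real) \<Rightarrow> (nat \<Rightarrow> real)
   \<Rightarrow> (nat \<Rightarrow> nat \<Rightarrow> nat \<Rightarrow> real) \<Rightarrow> (nat \<Rightarrow> nat \<Rightarrow> real) \<Rightarrow> nat \<Rightarrow> real" where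
  "energy T0 NH Nx dx rho D \<omega> n =
     1/2 * ((\<Sum>k\<le>NH. l2sq Nx dx (\<lambda>j. D n k j - Dinf rho k j))
            + l2sq Nx dx (\<lambda>j. Ah T0 Nx dx rho (\<omega> n) j / sqrt (rho j)))"

definition Rh ::
  "real \<Rightarrow> real \<Rightarrow> nat \<Rightarrow> nat \<Rightarrow> (nat \<Rightarrow> real) \<Rightarrow> (nat \<Rightarrow> real)
   \<Rightarrow> (nat \<Rightarrow> nat \<Rightarrow> nat \<Rightarrow> real) \<Rightarrow> (nat \<Rightarrow> nat \<Rightarrow> real) \<Rightarrow> nat \<Rightarrow> real" where
  "Rh T0 dt NH Nx dx rho D \<omega> n =
     1/2 * ((\<Sum>k\<le>NH. l2sq Nx dx (\<lambda>j. (D (Suc n) k j - D n k j) / dt))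
            + l2sq Nx dx (\<lambda>j. Ah T0 Nx dx rho (\<lambda>i. \<omega> (Suc n) i - \<omega> n i) j / (dt * sqrt (rho j))))"

end

theory Submission
  imports Defs
begin

text \<open>Test the k-th equation of the scheme against \<open>D\<^sup>n\<^sup>+\<^sup>1\<^sub>k - D\<^sub>\<infinity>\<^sub>,\<^sub>k\<close> and sum over k.
  The implicit time differences produce the energy increment plus the numerical dissipation
  through \<open>2a(a - b) = a\<^sup>2 - b\<^sup>2 + (a - b)\<^sup>2\<close>. Since \<open>\<A>\<^sub>h\<close> and \<open>\<A>\<^sub>h\<^sup>\<star>\<close> are adjoint
  (summation by parts on the torus), the couplings between neighbouring Hermite modes telescope,
  and the equilibrium contributes nothing because \<open>\<A>\<^sub>h \<surd>\<rho>\<^sub>\<infinity> = 0\<close>. Finally the Poisson equation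
  together with the equation for k = 0 turns the field term of the first mode into the increment of
  the potential energy \<open>\<parallel>\<A>\<^sub>h \<omega>\<^sub>h / \<surd>\<rho>\<^sub>\<infinity>\<parallel>\<^sup>2\<close>; only the relaxation terms \<open>k \<parallel>D\<^sub>k\<parallel>\<^sup>2 / \<tau>\<^sub>0\<close> remain.\<close>

lemma nxt_less: "j < Nx \<Longrightarrow> nxt Nx j < Nx"
  unfolding nxt_def by simp

lemma prv_less: "j < Nx \<Longrightarrow> prv Nx j < Nx"
  unfolding prv_def by simp

lemma prv_nxt: "j < Nx \<Longrightarrow> prv Nx (nxt Nx j) = j"
  unfolding prv_def nxt_def by (cases "j + 1 = Nx") auto

lemma nxt_prv: "j < Nx \<Longrightarrow> nxt Nx (prv Nx j) = j"
  unfolding prv_def nxt_def by (cases j) (auto simp: mod_Suc_eq)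

lemma sum_nxt_shift: "(\<Sum>j<Nx. h (nxt Nx j) j) = (\<Sum>j<Nx. h j (prv Nx j))"
  by (rule sum.reindex_bij_witness[where i="prv Nx" and j="nxt Nx"])
     (auto simp: prv_nxt nxt_prv nxt_less prv_less)

lemma l2ip_cong:
  "(\<And>j. j < Nx \<Longrightarrow> f j = f' j) \<Longrightarrow> (\<And>j. j < Nx \<Longrightarrow> g j = g' j)
   \<Longrightarrow> l2ip Nx dx f g = l2ip Nx dx f' g'"
  unfolding l2ip_def by (rule sum.cong) auto

lemma l2ip_commute: "l2ip Nx dx f g = l2ip Nx dx g f"
  unfolding l2ip_def by (simp add: mult_ac)

lemma l2ip_zero_left [simp]: "l2ip Nx dx (\<lambda>j. 0) g = 0"
  unfolding l2ip_def by simp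

lemma l2ip_add_right: "l2ip Nx dx f (\<lambda>j. g j + h j) = l2ip Nx dx f g + l2ip Nx dx f h"
  unfolding l2ip_def by (simp add: sum.distrib algebra_simps)

lemma l2ip_diff_left: "l2ip Nx dx (\<lambda>j. f j - h j) g = l2ip Nx dx f g - l2ip Nx dx h g"
  unfolding l2ip_def by (simp add: sum_subtractf algebra_simps)

lemma l2ip_diff_right: "l2ip Nx dx f (\<lambda>j. g j - h j) = l2ip Nx dx f g - l2ip Nx dx f h"
  unfolding l2ip_def by (simp add: sum_subtractf algebra_simps)

lemma l2ip_mult_right: "l2ip Nx dx f (\<lambda>j. c * g j) = c * l2ip Nx dx f g"
  unfolding l2ip_def by (simp add: sum_distrib_left mult_ac)

lemma l2ip_if_right: "l2ip Nx dx f (\<lambda>j. if P then g j else 0) = (if P then l2ip Nx dx f g else 0)"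
  unfolding l2ip_def by simp

lemma l2sq_nonneg: "(\<And>j. j < Nx \<Longrightarrow> dx j \<ge> 0) \<Longrightarrow> l2sq Nx dx f \<ge> 0"
  unfolding l2sq_def l2ip_def by (rule sum_nonneg) (simp add: mult.assoc)

lemma l2sq_divide: "l2sq Nx dx (\<lambda>j. f j / c) = l2sq Nx dx f / c\<^sup>2"
  unfolding l2sq_def l2ip_def by (simp add: sum_divide_distrib power2_eq_square)

lemma l2sq_polarization:
  assumes "\<And>j. z j = x j - y j"
  shows "l2sq Nx dx x - l2sq Nx dx y + l2sq Nx dx z = 2 * l2ip Nx dx x z"
  unfolding l2sq_def l2ip_def assms
  by (simp add: sum_subtractf[symmetric] sum.distrib[symmetric] sum_distrib_left algebra_simps)

lemma Ah_diff: "Ah T0 Nx dx rho (\<lambda>i. a i - b i) j = Ah T0 Nx dx rho a j - Ah T0 Nx dx rho b j"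
  unfolding Ah_def by (simp add: diff_divide_distrib right_diff_distrib left_diff_distrib)

lemma Ahs_diff: "Ahs T0 Nx dx rho (\<lambda>i. a i - b i) j = Ahs T0 Nx dx rho a j - Ahs T0 Nx dx rho b j"
  unfolding Ahs_def by (simp add: diff_divide_distrib right_diff_distrib left_diff_distrib)

lemma Ah_sqrt_rho:
  assumes "T0 > 0" "rho j \<noteq> 0"
  shows "Ah T0 Nx dx rho (\<lambda>i. sqrt (rho i)) j = 0"
proof -
  define s where "s = sqrt T0"
  have "T0 = s * s" "s > 0"
    using assms(1) by (simp_all add: s_def)
  then show ?thesis
    using assms(2) unfolding Ah_def Einf_def s_def[symmetric]
    by (cases "dx j = 0") (simp_all add: field_simps)
qed

lemma l2ip_Ah_Ahs:
  assumes "\<And>j. j < Nx \<Longrightarrow> dx j \<noteq> 0"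
  shows "l2ip Nx dx (Ah T0 Nx dx rho D) G = l2ip Nx dx D (Ahs T0 Nx dx rho G)"
proof -
  define e where "e j = dx j * Einf T0 Nx dx rho j / (2 * sqrt T0) * D j * G j" for j
  have "l2ip Nx dx (Ah T0 Nx dx rho D) G
      = sqrt T0 / 2 * (\<Sum>j<Nx. D (nxt Nx j) * G j - D (prv Nx j) * G j) - sum e {..<Nx}"
    unfolding l2ip_def Ah_def e_def sum_distrib_left sum_subtractf[symmetric]
    by (rule sum.cong) (simp_all add: assms field_simps)
  also have "(\<Sum>j<Nx. D (nxt Nx j) * G j - D (prv Nx j) * G j)
      = (\<Sum>j<Nx. D j * G (prv Nx j) - D j * G (nxt Nx j))"
    using sum_nxt_shift[of "\<lambda>i j. D i * G j" Nx] sum_nxt_shift[of "\<lambda>i j. D j * G i" Nx]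
    by (simp add: sum_subtractf)
  also have "sqrt T0 / 2 * \<dots> - sum e {..<Nx} = l2ip Nx dx D (Ahs T0 Nx dx rho G)"
    unfolding l2ip_def Ahs_def e_def sum_distrib_left sum_subtractf[symmetric]
    by (rule sum.cong) (simp_all add: assms field_simps)
  finally show ?thesis .
qed

locale linearized_scheme =
  fixes T0 eps tau0 dt :: real and NH Nx :: nat
    and dx rho :: "nat \<Rightarrow> real"
    and D :: "nat \<Rightarrow> nat \<Rightarrow> nat \<Rightarrow> real" and \<omega> :: "nat \<Rightarrow> nat \<Rightarrow> real"
  assumes T0_pos: "T0 > 0" and eps_pos: "eps > 0" and dt_pos: "dt > 0" and NH_pos: "NH \<ge> 1"
    and dx_pos: "\<And>j. j < Nx \<Longrightarrow> dx j > 0"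
    and rho_pos: "\<And>j. j < Nx \<Longrightarrow> rho j > 0"
    and scheme: "scheme T0 eps tau0 dt NH Nx dx rho D \<omega>"
begin

abbreviation "A \<equiv> Ah T0 Nx dx rho"
abbreviation "Astar \<equiv> Ahs T0 Nx dx rho"

lemma adjoint: "l2ip Nx dx (A f) g = l2ip Nx dx f (Astar g)"
  using dx_pos by (force intro: l2ip_Ah_Ahs)

text \<open>\<open>rate n k\<close> is \<open>\<epsilon>(D\<^sup>n\<^sup>+\<^sup>1\<^sub>k - D\<^sup>n\<^sub>k)/\<Delta>t\<close> as prescribed by the scheme; the scheme's guard
  \<open>k = 0\<close> on the term with \<open>D\<^sub>k\<^sub>-\<^sub>1\<close> is dropped since \<open>sqrt 0 = 0\<close>.\<close>

definition rate :: "nat \<Rightarrow> nat \<Rightarrow> nat \<Rightarrow> real" where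
  "rate n k j =
     - (real k / tau0) * D (Suc n) k j - sqrt (real k) * A (D (Suc n) (k - 1)) j
     + (if k + 1 \<le> NH then sqrt (real (k + 1)) * Astar (D (Suc n) (k + 1)) j else 0)
     - (if k = 1 then A (\<omega> (Suc n)) j else 0)"

lemma increment_eq_rate:
  assumes "k \<le> NH" "j < Nx"
  shows "D (Suc n) k j - D n k j = dt / eps * rate n k j"
proof -
  have "eps * (D (Suc n) k j - D n k j) / dt = rate n k j"
  proof (cases "k = 1")
    case True
    have "eps * (D (Suc n) 1 j - D n 1 j) / dt + A (D (Suc n) 0) j
        - sqrt 2 * (if 2 \<le> NH then Astar (D (Suc n) 2) j else 0) + A (\<omega> (Suc n)) j
        = - (1 / tau0) * D (Suc n) 1 j"
      using scheme assms(2) unfolding scheme_def by blast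
    then show ?thesis
      using True unfolding rate_def by (simp add: numeral_2_eq_2 split: if_splits)
  next
    case False
    have "eps * (D (Suc n) k j - D n k j) / dt
        + (if k = 0 then 0 else sqrt (real k) * A (D (Suc n) (k - 1)) j)
        - (if k + 1 \<le> NH then sqrt (real (k + 1)) * Astar (D (Suc n) (k + 1)) j else 0)
        = - (real k / tau0) * D (Suc n) k j"
      using scheme assms False unfolding scheme_def by blast
    then show ?thesis
      using False unfolding rate_def by (simp split: if_splits)
  qed
  then show ?thesis
    using eps_pos dt_pos by (simp add: field_simps)
qed

definition coupling :: "nat \<Rightarrow> nat \<Rightarrow> real" where
  "coupling n k = sqrt (real k) * l2ip Nx dx (D (Suc n) k) (A (D (Suc n) (k - 1)))"

lemma l2ip_rate:
  "l2ip Nx dx (D (Suc n) k) (rate n k) =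
     - (real k / tau0) * l2sq Nx dx (D (Suc n) k) - coupling n k
     + (if k + 1 \<le> NH then coupling n (k + 1) else 0)
     - (if k = 1 then l2ip Nx dx (D (Suc n) 1) (A (\<omega> (Suc n))) else 0)"
proof -
  have "l2ip Nx dx (D (Suc n) k) (Astar (D (Suc n) (k + 1)))
      = l2ip Nx dx (D (Suc n) (k + 1)) (A (D (Suc n) k))"
    by (metis adjoint l2ip_commute)
  then show ?thesis
    unfolding rate_def coupling_def l2sq_def
    by (simp only: l2ip_diff_right l2ip_add_right l2ip_if_right l2ip_mult_right) simp
qed

lemma l2ip_Dinf_rate: "l2ip Nx dx (Dinf rho k) (rate n k) = 0"
proof (cases "k = 0")
  case True
  have "l2ip Nx dx (Dinf rho k) (rate n k) = l2ip Nx dx (\<lambda>j. sqrt (rho j)) (Astar (D (Suc n) 1))"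
    using True NH_pos by (intro l2ip_cong) (simp_all add: Dinf_def rate_def)
  also have "\<dots> = l2ip Nx dx (A (\<lambda>j. sqrt (rho j))) (D (Suc n) 1)"
    by (simp add: adjoint)
  also have "\<dots> = l2ip Nx dx (\<lambda>j. 0) (D (Suc n) 1)"
    using T0_pos rho_pos by (intro l2ip_cong) (simp_all add: Ah_sqrt_rho order_less_imp_not_eq2)
  finally show ?thesis
    by simp
next
  case False
  then have "Dinf rho k = (\<lambda>j. 0)"
    by (simp add: Dinf_def fun_eq_iff)
  then show ?thesis
    by simp
qed

lemma sum_l2ip_rate:
  "(\<Sum>k\<le>NH. l2ip Nx dx (\<lambda>j. D (Suc n) k j - Dinf rho k j) (rate n k)) =
     - (1 / tau0) * (\<Sum>k=1..NH. real k * l2sq Nx dx (D (Suc n) k))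
     - l2ip Nx dx (D (Suc n) 1) (A (\<omega> (Suc n)))"
proof -
  have dissipation: "(\<Sum>k\<le>NH. - (real k / tau0) * l2sq Nx dx (D (Suc n) k))
      = - (1 / tau0) * (\<Sum>k=1..NH. real k * l2sq Nx dx (D (Suc n) k))"
    by (simp add: sum_distrib_left sum_negf atMost_atLeast0 sum.atLeast_Suc_atMost)
  have telescope: "(\<Sum>k\<le>NH. (if k + 1 \<le> NH then coupling n (k + 1) else 0) - coupling n k) = 0"
  proof -
    have "(\<Sum>k\<le>NH. if k + 1 \<le> NH then coupling n (k + 1) else 0) = (\<Sum>k<NH. coupling n (Suc k))"
      unfolding lessThan_Suc_atMost[symmetric] sum.lessThan_Suc by simp
    moreover have "(\<Sum>k\<le>NH. coupling n k) = coupling n 0 + (\<Sum>k<NH. coupling n (Suc k))"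
      by (rule sum.atMost_shift)
    moreover have "coupling n 0 = 0"
      by (simp add: coupling_def)
    ultimately show ?thesis
      by (simp add: sum_subtractf)
  qed
  have "(\<Sum>k\<le>NH. l2ip Nx dx (\<lambda>j. D (Suc n) k j - Dinf rho k j) (rate n k))
      = (\<Sum>k\<le>NH. - (real k / tau0) * l2sq Nx dx (D (Suc n) k))
        + (\<Sum>k\<le>NH. (if k + 1 \<le> NH then coupling n (k + 1) else 0) - coupling n k)
        - (\<Sum>k\<le>NH. if k = 1 then l2ip Nx dx (D (Suc n) 1) (A (\<omega> (Suc n))) else 0)"
    by (simp add: l2ip_diff_left l2ip_Dinf_rate l2ip_rate sum_subtractf sum.distrib sum_negf algebra_simps)
  also have "(\<Sum>k\<le>NH. if k = 1 then l2ip Nx dx (D (Suc n) 1) (A (\<omega> (Suc n))) else 0)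
      = l2ip Nx dx (D (Suc n) 1) (A (\<omega> (Suc n)))"
    using NH_pos by simp
  finally show ?thesis
    unfolding dissipation telescope by simp
qed

lemma poisson_increment:
  assumes "j < Nx"
  shows "Astar (\<lambda>i. A (\<lambda>i'. \<omega> (Suc n) i' - \<omega> n i') i / rho i) j = dt / eps * Astar (D (Suc n) 1) j"
proof -
  have "(\<lambda>i. A (\<lambda>i'. \<omega> (Suc n) i' - \<omega> n i') i / rho i)
      = (\<lambda>i. A (\<omega> (Suc n)) i / rho i - A (\<omega> n) i / rho i)"
    by (simp add: Ah_diff diff_divide_distrib)
  then have "Astar (\<lambda>i. A (\<lambda>i'. \<omega> (Suc n) i' - \<omega> n i') i / rho i) j
      = (D (Suc n) 0 j - sqrt (rho j)) - (D n 0 j - sqrt (rho j))"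
    using scheme assms unfolding scheme_def by (simp add: Ahs_diff)
  also have "\<dots> = dt / eps * rate n 0 j"
    using increment_eq_rate[of 0 j n] assms by simp
  also have "rate n 0 j = Astar (D (Suc n) 1) j"
    using NH_pos by (simp add: rate_def)
  finally show ?thesis .
qed

lemma l2ip_potential_increment:
  "l2ip Nx dx (\<lambda>j. A (\<omega> (Suc n)) j / sqrt (rho j))
              (\<lambda>j. A (\<lambda>i. \<omega> (Suc n) i - \<omega> n i) j / sqrt (rho j))
   = dt / eps * l2ip Nx dx (D (Suc n) 1) (A (\<omega> (Suc n)))"
proof -
  have "l2ip Nx dx (\<lambda>j. A (\<omega> (Suc n)) j / sqrt (rho j))
              (\<lambda>j. A (\<lambda>i. \<omega> (Suc n) i - \<omega> n i) j / sqrt (rho j))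
      = l2ip Nx dx (A (\<omega> (Suc n))) (\<lambda>j. A (\<lambda>i. \<omega> (Suc n) i - \<omega> n i) j / rho j)"
    unfolding l2ip_def using rho_pos by (intro sum.cong) (simp_all add: field_simps abs_of_pos)
  also have "\<dots> = l2ip Nx dx (\<omega> (Suc n)) (\<lambda>j. dt / eps * Astar (D (Suc n) 1) j)"
    unfolding adjoint by (intro l2ip_cong) (simp_all add: poisson_increment)
  also have "\<dots> = dt / eps * l2ip Nx dx (D (Suc n) 1) (A (\<omega> (Suc n)))"
    unfolding l2ip_mult_right by (metis adjoint l2ip_commute)
  finally show ?thesis .
qed

lemma energy_step:
  "energy T0 NH Nx dx rho D \<omega> (Suc n) - energy T0 NH Nx dx rho D \<omega> n
     + dt\<^sup>2 * Rh T0 dt NH Nx dx rho D \<omega> n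
   = (\<Sum>k\<le>NH. l2ip Nx dx (\<lambda>j. D (Suc n) k j - Dinf rho k j) (\<lambda>j. D (Suc n) k j - D n k j))
     + l2ip Nx dx (\<lambda>j. A (\<omega> (Suc n)) j / sqrt (rho j))
                  (\<lambda>j. A (\<lambda>i. \<omega> (Suc n) i - \<omega> n i) j / sqrt (rho j))"
proof -
  have modes: "l2sq Nx dx (\<lambda>j. D (Suc n) k j - Dinf rho k j) - l2sq Nx dx (\<lambda>j. D n k j - Dinf rho k j)
      + dt\<^sup>2 * l2sq Nx dx (\<lambda>j. (D (Suc n) k j - D n k j) / dt)
      = 2 * l2ip Nx dx (\<lambda>j. D (Suc n) k j - Dinf rho k j) (\<lambda>j. D (Suc n) k j - D n k j)" for k
  proof -
    have "dt\<^sup>2 * l2sq Nx dx (\<lambda>j. (D (Suc n) k j - D n k j) / dt) = l2sq Nx dx (\<lambda>j. D (Suc n) k j - D n k j)"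
      using dt_pos by (simp add: l2sq_divide)
    then show ?thesis
      by (simp add: l2sq_polarization)
  qed
  have potential: "l2sq Nx dx (\<lambda>j. A (\<omega> (Suc n)) j / sqrt (rho j)) - l2sq Nx dx (\<lambda>j. A (\<omega> n) j / sqrt (rho j))
      + dt\<^sup>2 * l2sq Nx dx (\<lambda>j. A (\<lambda>i. \<omega> (Suc n) i - \<omega> n i) j / (dt * sqrt (rho j)))
      = 2 * l2ip Nx dx (\<lambda>j. A (\<omega> (Suc n)) j / sqrt (rho j))
                       (\<lambda>j. A (\<lambda>i. \<omega> (Suc n) i - \<omega> n i) j / sqrt (rho j))"
  proof -
    have "dt\<^sup>2 * l2sq Nx dx (\<lambda>j. A (\<lambda>i. \<omega> (Suc n) i - \<omega> n i) j / (dt * sqrt (rho j)))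
        = l2sq Nx dx (\<lambda>j. A (\<lambda>i. \<omega> (Suc n) i - \<omega> n i) j / sqrt (rho j))"
      using dt_pos l2sq_divide[of Nx dx "\<lambda>j. A (\<lambda>i. \<omega> (Suc n) i - \<omega> n i) j / sqrt (rho j)" dt]
      by (simp add: mult.commute)
    moreover have "l2sq Nx dx (\<lambda>j. A (\<omega> (Suc n)) j / sqrt (rho j)) - l2sq Nx dx (\<lambda>j. A (\<omega> n) j / sqrt (rho j))
        + l2sq Nx dx (\<lambda>j. A (\<lambda>i. \<omega> (Suc n) i - \<omega> n i) j / sqrt (rho j))
        = 2 * l2ip Nx dx (\<lambda>j. A (\<omega> (Suc n)) j / sqrt (rho j))
                         (\<lambda>j. A (\<lambda>i. \<omega> (Suc n) i - \<omega> n i) j / sqrt (rho j))"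
      by (rule l2sq_polarization) (simp add: Ah_diff diff_divide_distrib)
    ultimately show ?thesis
      by simp
  qed
  have "energy T0 NH Nx dx rho D \<omega> (Suc n) - energy T0 NH Nx dx rho D \<omega> n
      + dt\<^sup>2 * Rh T0 dt NH Nx dx rho D \<omega> n
      = 1 / 2 * ((\<Sum>k\<le>NH. l2sq Nx dx (\<lambda>j. D (Suc n) k j - Dinf rho k j)
                   - l2sq Nx dx (\<lambda>j. D n k j - Dinf rho k j)
                   + dt\<^sup>2 * l2sq Nx dx (\<lambda>j. (D (Suc n) k j - D n k j) / dt))
        + (l2sq Nx dx (\<lambda>j. A (\<omega> (Suc n)) j / sqrt (rho j))
           - l2sq Nx dx (\<lambda>j. A (\<omega> n) j / sqrt (rho j))
           + dt\<^sup>2 * l2sq Nx dx (\<lambda>j. A (\<lambda>i. \<omega> (Suc n) i - \<omega> n i) j / (dt * sqrt (rho j)))))"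
    unfolding energy_def Rh_def by (simp add: sum.distrib sum_subtractf sum_distrib_left algebra_simps)
  then show ?thesis
    unfolding modes potential by (simp flip: sum_distrib_left)
qed

lemma energy_dissipation:
  "(energy T0 NH Nx dx rho D \<omega> (Suc n) - energy T0 NH Nx dx rho D \<omega> n) / dt
     + dt * Rh T0 dt NH Nx dx rho D \<omega> n
   = - (1 / (eps * tau0)) * (\<Sum>k=1..NH. real k * l2sq Nx dx (D (Suc n) k))"
proof -
  have modes: "(\<Sum>k\<le>NH. l2ip Nx dx (\<lambda>j. D (Suc n) k j - Dinf rho k j) (\<lambda>j. D (Suc n) k j - D n k j))
      = dt / eps * (\<Sum>k\<le>NH. l2ip Nx dx (\<lambda>j. D (Suc n) k j - Dinf rho k j) (rate n k))"
    unfolding sum_distrib_left l2ip_mult_right[symmetric]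
    by (intro sum.cong refl l2ip_cong) (simp_all add: increment_eq_rate)
  have "energy T0 NH Nx dx rho D \<omega> (Suc n) - energy T0 NH Nx dx rho D \<omega> n
      + dt\<^sup>2 * Rh T0 dt NH Nx dx rho D \<omega> n
      = dt / eps * (\<Sum>k\<le>NH. l2ip Nx dx (\<lambda>j. D (Suc n) k j - Dinf rho k j) (rate n k))
        + dt / eps * l2ip Nx dx (D (Suc n) 1) (A (\<omega> (Suc n)))"
    unfolding energy_step modes l2ip_potential_increment ..
  also have "\<dots> = dt / eps * (- (1 / tau0) * (\<Sum>k=1..NH. real k * l2sq Nx dx (D (Suc n) k)))"
    unfolding sum_l2ip_rate by (simp add: algebra_simps)
  finally show ?thesis
    using dt_pos eps_pos by (simp add: field_simps power2_eq_square)
qed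

lemma Rh_nonneg: "Rh T0 dt NH Nx dx rho D \<omega> n \<ge> 0"
  unfolding Rh_def using dx_pos
  by (intro mult_nonneg_nonneg add_nonneg_nonneg sum_nonneg l2sq_nonneg) (auto simp: less_imp_le)

end

theorem proposition3p2:
  fixes T0 eps tau0 dt :: real and NH Nx :: nat
    and dx rho :: "nat \<Rightarrow> real"
    and D :: "nat \<Rightarrow> nat \<Rightarrow> nat \<Rightarrow> real" and \<omega> :: "nat \<Rightarrow> nat \<Rightarrow> real"
  assumes "T0 > 0" "eps > 0" "tau0 > 0" "dt > 0" "NH \<ge> 1" "Nx \<ge> 1"
    and "\<And>j. j < Nx \<Longrightarrow> dx j > 0"
    and "\<And>j. j < Nx \<Longrightarrow> rho j > 0"
    and "scheme T0 eps tau0 dt NH Nx dx rho D \<omega>"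
  shows "(energy T0 NH Nx dx rho D \<omega> (Suc n) - energy T0 NH Nx dx rho D \<omega> n) / dt
           + dt * Rh T0 dt NH Nx dx rho D \<omega> n
         = - (1 / (eps * tau0)) * (\<Sum>k=1..NH. real k * l2sq Nx dx (D (Suc n) k))
       \<and> Rh T0 dt NH Nx dx rho D \<omega> n \<ge> 0"
proof -
  interpret linearized_scheme T0 eps tau0 dt NH Nx dx rho D \<omega>
    using assms by unfold_locales auto
  show ?thesis
    using energy_dissipation Rh_nonneg by blast
qed

end
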